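(* Consider a repeater chain in the model described in the context with $M+N+1$ nodes labelled $1,\dots,M+N+1$. Suppose nodes $1,\dots,M$ are at fixed locations, with fixed distances between consecutive ones (so the lengths of edges $1,\dots,M-1$ are fixed constants). Suppose nodes $M$ and $M+N+1$ are a distance $L$ apart and the $N$ repeater nodes $M+1,\dots,M+N$ are placed along a straight line between them. Let $\ell_i\ge0$ be the distance between nodes $M+i-1$ and $M+i$ for $i=1,\dots,N+1$, with $\sum_i\ell_i=L$. Then the entangling rate $R$ of the chain, as a function of $(\ell_1,\dots,\ell_{N+1})$, is maximal when $\ell_i=L/(N+1)$ for all $i$.
   Context: Repeater-chain model (swap-ASAP, synchronized attempts). Edge $j$ connects nodes $j$ and $j+1$ and has length $l_j\ge0$ (km). Entanglement generation proceeds in synchronized rounds of duration $t_{\mathrm{att}}=\frac1c\max_jl_j$ with $c=200{,}000$ km/s. In each round, every edge not yet successful makes an attempt succeeding independently with probability $p_j=10^{-\alpha l_j/10}$, $\alpha=0.2\ \mathrm{km}^{-1}$. So the number of rounds $X_j$ until edge $j$ succeeds is geometric on $\{1,2,\dots\}$ with parameter $p_j$, the $X_j$ are independent, and end-to-end entanglement completes at time $T_{\mathrm{done}}=t_{\mathrm{att}}\max_jX_j$. The entangling rate is $R=1/\mathbb E[T_{\mathrm{done}}]$. *)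

theory Defs
  imports "HOL-Probability.Probability"
begin

text \<open>Physical constants: speed of light in fibre c (km/s) and attenuation alpha (1/km).\<close>
definition c_light :: real where "c_light = 200000"
definition alpha_att :: real where "alpha_att = 0.2"

definition succ_prob :: "real \<Rightarrow> real" where
  "succ_prob l = 10 powr (- alpha_att * l / 10)"

definition t_att :: "nat \<Rightarrow> (nat \<Rightarrow> real) \<Rightarrow> real" where
  "t_att K l = (Max (l ` {..<K})) / c_light"

text \<open>Joint law of the numbers of rounds X_j (geometric on 1,2,..., independent).\<close>
definition rounds_pmf :: "nat \<Rightarrow> (nat \<Rightarrow> real) \<Rightarrow> (nat \<Rightarrow> nat) pmf" where
  "rounds_pmf K l = Pi_pmf {..<K} 0 (\<lambda>j. map_pmf Suc (geometric_pmf (succ_prob (l j))))"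

definition T_done :: "nat \<Rightarrow> (nat \<Rightarrow> real) \<Rightarrow> (nat \<Rightarrow> nat) \<Rightarrow> real" where
  "T_done K l X = t_att K l * real (Max (X ` {..<K}))"

definition ent_rate :: "nat \<Rightarrow> (nat \<Rightarrow> real) \<Rightarrow> real" where
  "ent_rate K l = 1 / measure_pmf.expectation (rounds_pmf K l) (T_done K l)"

text \<open>Edge lengths of the chain: edges 0..M-2 (paper's edges 1..M-1) have the fixed
  lengths d, edges M-1..M+N-1 (paper's edges M..M+N) have lengths ell 0..ell N
  (paper's ell_1..ell_{N+1}).\<close>
definition chain_lengths :: "nat \<Rightarrow> (nat \<Rightarrow> real) \<Rightarrow> (nat \<Rightarrow> real) \<Rightarrow> nat \<Rightarrow> real" where
  "chain_lengths M d ell j = (if j < M - 1 then d j else ell (j - (M - 1)))"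

end

theory Submission
  imports Defs
begin

(* E[T_done] = t_att * E[max_j X_j], and E[max_j X_j] = sum_n (1 - prod_j P(X_j <= n)) with
   P(X_j <= n) = 1 - (1 - exp (- k l_j))^n, k = ln 10 / 50.  The function
   s |-> - ln (1 - (1 - exp (- s))^n) is convex on [0, inf): its derivative is
   n u^(n-1) / (1 + u + ... + u^(n-1)) with u = 1 - exp (- s), which increases with u.
   By Jensen, for a fixed total length L of the free edges every product prod_j P(X_j <= n)
   is largest at equal spacing, so every tail probability of max_j X_j, and hence its mean,
   is smallest there.  The longest edge, which fixes t_att, is also smallest at equal spacing,
   since some free edge is at least as long as the mean L / (N + 1).  Both factors of
   E[T_done] decrease, so the rate increases. *)

lemma power_div_geometric_sum_mono:
  fixes x y :: real
  assumes "0 \<le> x" "x \<le> y"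
  shows "x ^ n / (\<Sum>k\<le>n. x ^ k) \<le> y ^ n / (\<Sum>k\<le>n. y ^ k)"
proof -
  have geometric_sum_ge_1: "1 \<le> (\<Sum>k\<le>n. z ^ k)" if "0 \<le> z" for z :: real
    using member_le_sum[of 0 "{..n}" "\<lambda>k. z ^ k"] that by simp
  have "x ^ n * y ^ k \<le> y ^ n * x ^ k" if k: "k \<le> n" for k
  proof -
    obtain m where n: "n = k + m"
      using le_Suc_ex[OF k] by blast
    have "x ^ m \<le> y ^ m"
      using assms by (intro power_mono)
    then have "(x ^ k * y ^ k) * x ^ m \<le> (x ^ k * y ^ k) * y ^ m"
      using assms by (intro mult_left_mono) auto
    then show ?thesis
      unfolding n power_add by (simp add: algebra_simps)
  qed
  then have "x ^ n * (\<Sum>k\<le>n. y ^ k) \<le> y ^ n * (\<Sum>k\<le>n. x ^ k)"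
    unfolding sum_distrib_left by (intro sum_mono) auto
  moreover have "0 < (\<Sum>k\<le>n. x ^ k)" "0 < (\<Sum>k\<le>n. y ^ k)"
    using geometric_sum_ge_1[of x] geometric_sum_ge_1[of y] assms by linarith+
  ultimately show ?thesis
    by (simp add: divide_simps mult.commute)
qed

definition neg_ln_geometric_cdf :: "nat \<Rightarrow> real \<Rightarrow> real" where
  "neg_ln_geometric_cdf n s = - ln (1 - (1 - exp (- s)) ^ n)"

lemma geometric_cdf_pos:
  fixes s :: real
  assumes "0 \<le> s" "1 \<le> n"
  shows "0 < 1 - (1 - exp (- s)) ^ n"
proof -
  have "exp (- s) \<le> 1"
    using assms by simp
  then have "0 \<le> 1 - exp (- s)" "1 - exp (- s) < 1"
    by simp_all
  then have "(1 - exp (- s)) ^ n < 1 ^ n"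
    using assms by (intro power_strict_mono) auto
  then show ?thesis
    by simp
qed

lemma convex_on_neg_ln_geometric_cdf:
  assumes "1 \<le> n"
  shows "convex_on {0..} (neg_ln_geometric_cdf n)"
proof -
  obtain m where n: "n = Suc m"
    using assms by (cases n) auto
  define u where "u s = 1 - exp (- s)" for s :: real
  define D where "D s = real n * u s ^ (n - 1) * exp (- s) / (1 - u s ^ n)" for s
  have D_eq: "D s = real n * (u s ^ m / (\<Sum>k\<le>m. u s ^ k))" for s
  proof -
    have "1 - u s ^ n = exp (- s) * (\<Sum>k\<le>m. u s ^ k)"
      unfolding n by (subst one_diff_power_eq) (simp_all add: u_def atLeast0AtMost lessThan_Suc_atMost)
    then show ?thesis
      unfolding D_def n by simp
  qed
  show ?thesis
  proof (rule convex_on_realI[where f' = D])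
    fix s :: real
    assume "s \<in> {0..}"
    then have "0 < 1 - u s ^ n"
      unfolding u_def by (intro geometric_cdf_pos assms) simp
    then show "(neg_ln_geometric_cdf n has_real_derivative D s) (at s)"
      unfolding neg_ln_geometric_cdf_def[abs_def] D_def u_def
      by (auto intro!: derivative_eq_intros simp: field_simps)
  next
    fix s t :: real
    assume "s \<in> {0..}" "t \<in> {0..}" "s \<le> t"
    then have "0 \<le> u s" "u s \<le> u t"
      by (simp_all add: u_def)
    then show "D s \<le> D t"
      unfolding D_eq by (intro mult_left_mono power_div_geometric_sum_mono) simp_all
  qed simp
qed

lemma convex_on_mean_le:
  fixes f :: "real \<Rightarrow> real"
  assumes "convex_on C f" "finite I" "I \<noteq> {}" "\<And>i. i \<in> I \<Longrightarrow> x i \<in> C"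
  shows "card I * f ((\<Sum>i\<in>I. x i) / card I) \<le> (\<Sum>i\<in>I. f (x i))"
proof -
  have "f (\<Sum>i\<in>I. (1 / card I) *\<^sub>R x i) \<le> (\<Sum>i\<in>I. (1 / card I) * f (x i))"
    using assms by (intro convex_on_sum) auto
  then show ?thesis
    using assms by (simp add: sum_divide_distrib[symmetric] le_divide_eq card_gt_0_iff mult.commute)
qed

definition round_cdf :: "nat \<Rightarrow> real \<Rightarrow> real" where
  "round_cdf n l = 1 - (1 - succ_prob l) ^ n"

lemma succ_prob_eq_exp: "succ_prob l = exp (- (ln 10 / 50 * l))"
  unfolding succ_prob_def alpha_att_def powr_def by (simp add: field_simps)

lemma succ_prob_pos: "0 < succ_prob l"
  by (simp add: succ_prob_eq_exp)

lemma succ_prob_le_1: "0 \<le> l \<Longrightarrow> succ_prob l \<le> 1"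
  by (simp add: succ_prob_eq_exp)

lemma round_cdf_nonneg: "0 \<le> l \<Longrightarrow> 0 \<le> round_cdf n l"
  using succ_prob_pos[of l] succ_prob_le_1[of l] by (simp add: round_cdf_def power_le_one)

lemma round_cdf_le_1: "0 \<le> l \<Longrightarrow> round_cdf n l \<le> 1"
  using succ_prob_le_1[of l] by (simp add: round_cdf_def)

lemma round_cdf_eq_exp:
  assumes "0 \<le> l" "1 \<le> n"
  shows "round_cdf n l = exp (- neg_ln_geometric_cdf n (ln 10 / 50 * l))"
  using geometric_cdf_pos[of "ln 10 / 50 * l" n] assms
  unfolding round_cdf_def neg_ln_geometric_cdf_def succ_prob_eq_exp by simp

lemma prod_round_cdf_le_mean:
  assumes "finite I" "I \<noteq> {}" "\<And>i. i \<in> I \<Longrightarrow> 0 \<le> l i"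
  shows "(\<Prod>i\<in>I. round_cdf n (l i)) \<le> round_cdf n ((\<Sum>i\<in>I. l i) / card I) ^ card I"
proof (cases "n = 0")
  case True
  then show ?thesis
    by (simp add: round_cdf_def)
next
  case False
  define \<kappa> :: real where "\<kappa> = ln 10 / 50"
  define \<psi> where "\<psi> = neg_ln_geometric_cdf n"
  have "0 < \<kappa>"
    by (simp add: \<kappa>_def)
  have mean_nonneg: "0 \<le> (\<Sum>i\<in>I. l i) / card I"
    using assms by (simp add: sum_nonneg)
  have "card I * \<psi> ((\<Sum>i\<in>I. \<kappa> * l i) / card I) \<le> (\<Sum>i\<in>I. \<psi> (\<kappa> * l i))"
    using convex_on_mean_le[OF convex_on_neg_ln_geometric_cdf, of n I "\<lambda>i. \<kappa> * l i"]
      assms False \<open>0 < \<kappa>\<close> by (simp add: \<psi>_def field_simps)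
  then have jensen: "card I * \<psi> (\<kappa> * ((\<Sum>i\<in>I. l i) / card I)) \<le> (\<Sum>i\<in>I. \<psi> (\<kappa> * l i))"
    by (simp add: sum_distrib_left)
  have "(\<Prod>i\<in>I. round_cdf n (l i)) = exp (- (\<Sum>i\<in>I. \<psi> (\<kappa> * l i)))"
    using assms False by (simp add: round_cdf_eq_exp \<psi>_def \<kappa>_def exp_sum sum_negf[symmetric])
  also have "\<dots> \<le> exp (- (card I * \<psi> (\<kappa> * ((\<Sum>i\<in>I. l i) / card I))))"
    using jensen by simp
  also have "\<dots> = round_cdf n ((\<Sum>i\<in>I. l i) / card I) ^ card I"
    using mean_nonneg False
    by (simp add: round_cdf_eq_exp \<psi>_def \<kappa>_def exp_of_nat_mult[symmetric])
  finally show ?thesis .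
qed

lemma prob_Suc_geometric_atMost:
  assumes "0 < q" "q \<le> 1"
  shows "measure_pmf.prob (map_pmf Suc (geometric_pmf q)) {..n} = 1 - (1 - q) ^ n"
proof -
  have "Suc -` {..n} = {..<n}"
    by auto
  then have "measure_pmf.prob (map_pmf Suc (geometric_pmf q)) {..n} = measure_pmf.prob (geometric_pmf q) {..<n}"
    by (simp add: measure_map_pmf)
  also have "\<dots> = (\<Sum>k<n. (1 - q) ^ k * q)"
    using assms by (simp add: measure_measure_pmf_finite)
  also have "\<dots> = 1 - (1 - q) ^ n"
    by (subst one_diff_power_eq) (simp add: sum_distrib_left mult.commute)
  finally show ?thesis .
qed

lemma prob_Pi_pmf_Max_le:
  fixes p :: "'a \<Rightarrow> nat pmf"
  assumes "finite I" "I \<noteq> {}"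
  shows "measure_pmf.prob (Pi_pmf I dflt p) {X. Max (X ` I) \<le> n}
           = (\<Prod>i\<in>I. measure_pmf.prob (p i) {..n})"
proof -
  have "{X. Max (X ` I) \<le> n} = Pi I (\<lambda>_. {..n})"
    using assms by (auto simp: Pi_def)
  then show ?thesis
    using assms by (simp add: measure_Pi_pmf_Pi)
qed

lemma expectation_nat_eq_suminf_prob_greater:
  fixes P :: "'a pmf" and Y :: "'a \<Rightarrow> nat"
  assumes "summable (\<lambda>n. measure_pmf.prob P {x. n < Y x})"
  shows "measure_pmf.expectation P (\<lambda>x. real (Y x)) = (\<Sum>n. measure_pmf.prob P {x. n < Y x})"
proof -
  have "measure_pmf.expectation P (\<lambda>x. real (Y x)) = enn2real (\<integral>\<^sup>+ x. of_nat (Y x) \<partial>P)"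
    by (subst integral_eq_nn_integral) (auto simp: ennreal_of_nat_eq_real_of_nat)
  also have "(\<integral>\<^sup>+ x. of_nat (Y x) \<partial>P) = (\<Sum>n. ennreal (measure_pmf.prob P {x. n < Y x}))"
    by (subst nn_integral_nat_function) (simp_all add: measure_pmf.emeasure_eq_measure)
  also have "\<dots> = ennreal (\<Sum>n. measure_pmf.prob P {x. n < Y x})"
    using assms by (intro suminf_ennreal2) auto
  finally show ?thesis
    by (simp add: suminf_nonneg assms)
qed

lemma one_minus_prod_le_sum:
  fixes a :: "'a \<Rightarrow> real"
  assumes "finite A" "\<And>j. j \<in> A \<Longrightarrow> 0 \<le> a j \<and> a j \<le> 1"
  shows "1 - (\<Prod>j\<in>A. 1 - a j) \<le> (\<Sum>j\<in>A. a j)"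
  using assms
proof (induction A rule: finite_induct)
  case empty
  then show ?case
    by simp
next
  case (insert x F)
  let ?P = "\<Prod>j\<in>F. 1 - a j"
  have "?P \<le> 1" "0 \<le> a x"
    using insert.prems by (auto intro: prod_le_1)
  then have "a x * ?P \<le> a x"
    by (simp add: mult_left_le)
  then show ?case
    using insert by (simp add: algebra_simps)
qed

definition max_rounds_tail :: "nat \<Rightarrow> (nat \<Rightarrow> real) \<Rightarrow> nat \<Rightarrow> real" where
  "max_rounds_tail K l n = 1 - (\<Prod>j<K. round_cdf n (l j))"

lemma max_rounds_tail_nonneg:
  assumes "\<And>j. j < K \<Longrightarrow> 0 \<le> l j"
  shows "0 \<le> max_rounds_tail K l n"
  using assms unfolding max_rounds_tail_def
  by (auto intro!: prod_le_1 simp: round_cdf_nonneg round_cdf_le_1)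

lemma prob_max_rounds_greater:
  assumes "0 < K" "\<And>j. j < K \<Longrightarrow> 0 \<le> l j"
  shows "measure_pmf.prob (rounds_pmf K l) {X. n < Max (X ` {..<K})} = max_rounds_tail K l n"
proof -
  have "measure_pmf.prob (map_pmf Suc (geometric_pmf (succ_prob (l j)))) {..n} = round_cdf n (l j)"
    if "j < K" for j
    unfolding round_cdf_def using assms(2)[OF that]
    by (intro prob_Suc_geometric_atMost succ_prob_pos succ_prob_le_1)
  then have "measure_pmf.prob (rounds_pmf K l) {X. Max (X ` {..<K}) \<le> n} = (\<Prod>j<K. round_cdf n (l j))"
    using assms(1) unfolding rounds_pmf_def
    by (subst prob_Pi_pmf_Max_le) (auto simp del: measure_map_pmf)
  moreover have "{X. n < Max (X ` {..<K})} = UNIV - {X. Max (X ` {..<K}) \<le> n}"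
    by auto
  ultimately show ?thesis
    using measure_pmf.prob_compl[of "{X. Max (X ` {..<K}) \<le> n}" "rounds_pmf K l"]
    unfolding max_rounds_tail_def by simp
qed

lemma summable_max_rounds_tail:
  assumes "\<And>j. j < K \<Longrightarrow> 0 \<le> l j"
  shows "summable (max_rounds_tail K l)"
proof (rule summable_comparison_test')
  show "summable (\<lambda>n. \<Sum>j<K. (1 - succ_prob (l j)) ^ n)"
    using assms succ_prob_pos by (intro summable_sum summable_geometric) (simp add: succ_prob_le_1)
next
  fix n
  have "0 \<le> max_rounds_tail K l n"
    using assms by (rule max_rounds_tail_nonneg)
  moreover have "max_rounds_tail K l n \<le> (\<Sum>j<K. (1 - succ_prob (l j)) ^ n)"
    unfolding max_rounds_tail_def round_cdf_def using assms succ_prob_pos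
    by (intro one_minus_prod_le_sum) (auto intro!: power_le_one simp: succ_prob_le_1 less_imp_le)
  ultimately show "norm (max_rounds_tail K l n) \<le> (\<Sum>j<K. (1 - succ_prob (l j)) ^ n)"
    by simp
qed

lemma one_le_suminf_max_rounds_tail:
  assumes "0 < K" "\<And>j. j < K \<Longrightarrow> 0 \<le> l j"
  shows "1 \<le> suminf (max_rounds_tail K l)"
proof -
  have "max_rounds_tail K l 0 = 1"
    using assms(1) by (simp add: max_rounds_tail_def round_cdf_def)
  moreover have "sum (max_rounds_tail K l) {0} \<le> suminf (max_rounds_tail K l)"
    using assms by (intro sum_le_suminf summable_max_rounds_tail max_rounds_tail_nonneg) auto
  ultimately show ?thesis
    by simp
qed

lemma ent_rate_eq:
  assumes "0 < K" "\<And>j. j < K \<Longrightarrow> 0 \<le> l j"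
  shows "ent_rate K l = 1 / (t_att K l * suminf (max_rounds_tail K l))"
proof -
  have "measure_pmf.expectation (rounds_pmf K l) (\<lambda>X. real (Max (X ` {..<K})))
      = suminf (max_rounds_tail K l)"
    using assms by (simp add: expectation_nat_eq_suminf_prob_greater prob_max_rounds_greater
      summable_max_rounds_tail)
  then show ?thesis
    unfolding ent_rate_def T_done_def by simp
qed

lemma lessThan_add_eq_Un_shift:
  fixes a b :: nat
  shows "{..<a + b} = {..<a} \<union> (\<lambda>i. i + a) ` {..<b}"
proof -
  have "(\<lambda>i. i + a) ` {..<b} = {a..<a + b}"
    using image_add_atLeastLessThan'[of a 0 b] by (simp add: atLeast0LessThan add.commute)
  then show ?thesis
    by auto
qed

lemma chain_lengths_split:
  assumes "1 \<le> M"
  shows "{..<M + N} = {..<M - 1} \<union> (\<lambda>i. i + (M - 1)) ` {..<N + 1}"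
    and "chain_lengths M d e (i + (M - 1)) = e i"
    and "j < M - 1 \<Longrightarrow> chain_lengths M d e j = d j"
proof -
  have "M + N = (M - 1) + (N + 1)"
    using assms by simp
  then show "{..<M + N} = {..<M - 1} \<union> (\<lambda>i. i + (M - 1)) ` {..<N + 1}"
    by (simp only: lessThan_add_eq_Un_shift)
qed (simp_all add: chain_lengths_def)

lemma prod_chain_lengths:
  assumes "1 \<le> M"
  shows "(\<Prod>j<M + N. f (chain_lengths M d e j)) = (\<Prod>j<M - 1. f (d j)) * (\<Prod>i<N + 1. f (e i))"
proof -
  have "(\<Prod>j<M + N. f (chain_lengths M d e j))
      = (\<Prod>j<M - 1. f (chain_lengths M d e j))
        * (\<Prod>j\<in>(\<lambda>i. i + (M - 1)) ` {..<N + 1}. f (chain_lengths M d e j))"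
    unfolding chain_lengths_split(1)[OF assms] by (rule prod.union_disjoint) auto
  also have "\<dots> = (\<Prod>j<M - 1. f (d j)) * (\<Prod>i<N + 1. f (e i))"
    using chain_lengths_split(2,3)[OF assms] by (simp add: prod.reindex)
  finally show ?thesis .
qed

lemma chain_lengths_image:
  assumes "1 \<le> M"
  shows "chain_lengths M d e ` {..<M + N} = d ` {..<M - 1} \<union> e ` {..<N + 1}"
  using chain_lengths_split[OF assms] by (simp add: image_Un image_image)

lemma chain_lengths_nonneg:
  assumes "1 \<le> M" "\<forall>j < M - 1. 0 \<le> d j" "\<forall>i < N + 1. 0 \<le> e i" "j < M + N"
  shows "0 \<le> chain_lengths M d e j"
  using assms unfolding chain_lengths_def by auto

lemma t_att_nonneg:
  assumes "0 < K" "\<And>j. j < K \<Longrightarrow> 0 \<le> l j"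
  shows "0 \<le> t_att K l"
proof -
  have "l 0 \<le> Max (l ` {..<K})"
    using assms(1) by (intro Max_ge) auto
  then show ?thesis
    using assms(2)[OF assms(1)] unfolding t_att_def c_light_def by simp
qed

lemma t_att_uniform_chain_le:
  assumes "1 \<le> M" "\<forall>i < N + 1. 0 \<le> ell i" "(\<Sum>i<N + 1. ell i) = L"
  shows "t_att (M + N) (chain_lengths M d (\<lambda>_. L / real (N + 1)))
           \<le> t_att (M + N) (chain_lengths M d ell)"
proof -
  have "L \<le> real (N + 1) * Max (ell ` {..<N + 1})"
    using sum_bounded_above[of "{..<N + 1}" ell "Max (ell ` {..<N + 1})"]
    unfolding assms(3) by simp
  then have "L / real (N + 1) \<le> Max (ell ` {..<N + 1})"
    by (simp add: divide_le_eq mult.commute)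
  also have "Max (ell ` {..<N + 1}) \<le> Max (d ` {..<M - 1} \<union> ell ` {..<N + 1})"
    by (intro Max_mono) auto
  finally have "Max (d ` {..<M - 1} \<union> {L / real (N + 1)}) \<le> Max (d ` {..<M - 1} \<union> ell ` {..<N + 1})"
    by (intro Max.boundedI) auto
  then show ?thesis
    unfolding t_att_def chain_lengths_image[OF assms(1)]
    by (simp add: image_constant_conv lessThan_empty_iff c_light_def divide_right_mono)
qed

lemma t_att_chain_le_uniform:
  assumes "1 \<le> M" "\<forall>j < M - 1. 0 \<le> d j" "\<forall>i < N + 1. 0 \<le> ell i" "(\<Sum>i<N + 1. ell i) = L"
  shows "t_att (M + N) (chain_lengths M d ell)
           \<le> real (N + 1) * t_att (M + N) (chain_lengths M d (\<lambda>_. L / real (N + 1)))"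
proof -
  define U where "U = Max (d ` {..<M - 1} \<union> {L / real (N + 1)})"
  have "0 \<le> L"
    using assms(3,4) by (metis lessThan_iff sum_nonneg)
  have mean_le_U: "L / real (N + 1) \<le> U" and d_le_U: "\<And>j. j < M - 1 \<Longrightarrow> d j \<le> U"
    unfolding U_def by (auto intro: Max_ge)
  have "ell i \<le> real (N + 1) * U" if "i < N + 1" for i
  proof -
    have "ell i \<le> L"
      unfolding assms(4)[symmetric] using assms(3) that by (intro member_le_sum) auto
    also have "L \<le> real (N + 1) * U"
      using mean_le_U by (simp add: divide_le_eq mult.commute)
    finally show ?thesis .
  qed
  moreover have "d j \<le> real (N + 1) * U" if "j < M - 1" for j
  proof -
    have "0 \<le> U"
      using mean_le_U \<open>0 \<le> L\<close> by (meson order_trans divide_nonneg_nonneg of_nat_0_le_iff)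
    then have "U \<le> real (N + 1) * U"
      by (simp add: distrib_right)
    then show ?thesis
      using d_le_U[OF that] by linarith
  qed
  ultimately have "Max (d ` {..<M - 1} \<union> ell ` {..<N + 1}) \<le> real (N + 1) * U"
    by (intro Max.boundedI) auto
  then show ?thesis
    unfolding t_att_def chain_lengths_image[OF assms(1)] U_def
    by (simp add: image_constant_conv lessThan_empty_iff c_light_def divide_right_mono)
qed

lemma max_rounds_tail_uniform_chain_le:
  assumes "1 \<le> M" "\<forall>j < M - 1. 0 \<le> d j" "\<forall>i < N + 1. 0 \<le> ell i" "(\<Sum>i<N + 1. ell i) = L"
  shows "max_rounds_tail (M + N) (chain_lengths M d (\<lambda>_. L / real (N + 1))) n
           \<le> max_rounds_tail (M + N) (chain_lengths M d ell) n"
proof -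
  have "(\<Prod>i<N + 1. round_cdf n (ell i))
      \<le> round_cdf n ((\<Sum>i<N + 1. ell i) / card {..<N + 1}) ^ card {..<N + 1}"
    using assms(3) by (intro prod_round_cdf_le_mean) auto
  then have "(\<Prod>i<N + 1. round_cdf n (ell i)) \<le> (\<Prod>i<N + 1. round_cdf n (L / real (N + 1)))"
    unfolding assms(4) by simp
  moreover have "0 \<le> (\<Prod>j<M - 1. round_cdf n (d j))"
    using assms(2) by (auto intro!: prod_nonneg round_cdf_nonneg)
  ultimately show ?thesis
    unfolding max_rounds_tail_def prod_chain_lengths[OF assms(1)]
    by (simp add: mult_left_mono)
qed

text \<open>The hypothesis \<open>t \<le> c * t'\<close> only matters when \<open>t' = 0\<close>: then \<open>1 / (t' * E')\<close> is the
  junk value \<open>0\<close>, and \<open>t \<le> 0\<close> forces \<open>1 / (t * E) \<le> 0\<close> as well.\<close>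

lemma one_div_mult_le_one_div_mult:
  fixes t t' E E' c :: real
  assumes "0 \<le> t'" "t' \<le> t" "t \<le> c * t'" "0 < E'" "E' \<le> E"
  shows "1 / (t * E) \<le> 1 / (t' * E')"
proof (cases "t' = 0")
  case True
  then show ?thesis
    using assms by (simp add: divide_le_0_iff mult_nonpos_nonneg)
next
  case False
  then have "0 < t' * E'"
    using assms by simp
  moreover have "t' * E' \<le> t * E"
    using assms by (intro mult_mono) auto
  ultimately show ?thesis
    by (simp add: frac_le)
qed

theorem mainTheorem5:
  fixes M N :: nat and d ell :: "nat \<Rightarrow> real" and L :: real
  assumes "M \<ge> 1"
    and "\<forall>j < M - 1. d j \<ge> 0"
    and "\<forall>i < N + 1. ell i \<ge> 0"
    and "(\<Sum>i<N + 1. ell i) = L"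
  shows "ent_rate (M + N) (chain_lengths M d ell)
           \<le> ent_rate (M + N) (chain_lengths M d (\<lambda>_. L / real (N + 1)))"
proof -
  define l where "l = chain_lengths M d ell"
  define u where "u = chain_lengths M d (\<lambda>_. L / real (N + 1))"
  have "0 \<le> L"
    using assms(3,4) by (metis lessThan_iff sum_nonneg)
  then have l_nonneg: "\<And>j. j < M + N \<Longrightarrow> 0 \<le> l j" and u_nonneg: "\<And>j. j < M + N \<Longrightarrow> 0 \<le> u j"
    using assms(1-3) unfolding l_def u_def by (auto intro!: chain_lengths_nonneg)
  have K: "0 < M + N"
    using assms(1) by simp
  have "suminf (max_rounds_tail (M + N) u) \<le> suminf (max_rounds_tail (M + N) l)"
    using assms l_nonneg u_nonneg unfolding l_def u_def
    by (intro suminf_le max_rounds_tail_uniform_chain_le summable_max_rounds_tail) simp_all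
  moreover have "1 \<le> suminf (max_rounds_tail (M + N) u)"
    using K u_nonneg by (rule one_le_suminf_max_rounds_tail)
  moreover have "t_att (M + N) u \<le> t_att (M + N) l" "t_att (M + N) l \<le> real (N + 1) * t_att (M + N) u"
    unfolding l_def u_def
    using t_att_uniform_chain_le[OF assms(1,3,4)] t_att_chain_le_uniform[OF assms] by simp_all
  moreover have "0 \<le> t_att (M + N) u"
    using K u_nonneg by (rule t_att_nonneg)
  moreover have "ent_rate (M + N) l = 1 / (t_att (M + N) l * suminf (max_rounds_tail (M + N) l))"
    and "ent_rate (M + N) u = 1 / (t_att (M + N) u * suminf (max_rounds_tail (M + N) u))"
    using K l_nonneg u_nonneg by (simp_all add: ent_rate_eq)
  ultimately have "ent_rate (M + N) l \<le> ent_rate (M + N) u"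
    using one_div_mult_le_one_div_mult by simp
  then show ?thesis
    unfolding l_def u_def .
qed

end
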